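(* Let $L$ be a complete lattice with a t-norm $\otimes$ and a t-conorm $\oplus$, and let $\Gamma=\{f_i:L^n\to L: i=1,\dots,n\}$ be a distributive family on $\langle L,\oplus,\otimes\rangle$. Then for every $(a_1,\dots,a_n)\in L^n$, $$\bigwedge_{i=1}^n a_i\ \le\ DYOWA_\Gamma(a_1,\dots,a_n)\ \le\ \bigvee_{i=1}^n a_i.$$
   Context: A t-norm (resp. t-conorm) on a complete lattice $L$ is an isotonic, commutative, associative binary operation $\otimes$ (resp. $\oplus$) on $L$ with neutral element $\top_L$ (resp. $\bot_L$). $n$-ary versions are defined by left folding: $\bigoplus_{i=1}^n x_i=(\cdots((x_1\oplus x_2)\oplus x_3)\cdots)\oplus x_n$. A finite family $\Gamma=\{f_i:L^n\to L: i=1,\dots,n\}$ is a weight function family if $\bigoplus_{i=1}^n f_i(\vec a)=\top_L$ for every $\vec a\in L^n$. It is a distributive family if moreover $c\otimes\bigl(\bigoplus_{i=1}^n f_i(\vec a)\bigr)=\bigoplus_{i=1}^n (c\otimes f_i(\vec a))$ for all $c\in L$ and $\vec a\in L^n$. The Lizasoain–Moreno function is $\mathscr{LM}(a_1,\dots,a_n)=(b_1,\dots,b_n)$ with $b_k=\bigvee_{\{j_1<\dots<j_k\}\subseteq\{1,\dots,n\}} a_{j_1}\wedge\cdots\wedge a_{j_k}$ (join over all $k$-element subsets). $DYOWA_\Gamma(\vec a)=\bigoplus_{i=1}^n \bigl(f_i(\vec a)\otimes b_i\bigr)$, where $(b_1,\dots,b_n)=\mathscr{LM}(\vec a)$. 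*)

theory Defs
  imports Main
begin

definition is_tnorm :: "('a::complete_lattice \<Rightarrow> 'a \<Rightarrow> 'a) \<Rightarrow> bool" where
  "is_tnorm T \<longleftrightarrow>
     (\<forall>x x' y y'. x \<le> x' \<longrightarrow> y \<le> y' \<longrightarrow> T x y \<le> T x' y') \<and>
     (\<forall>x y. T x y = T y x) \<and>
     (\<forall>x y z. T (T x y) z = T x (T y z)) \<and>
     (\<forall>x. T x top = x)"

definition is_tconorm :: "('a::complete_lattice \<Rightarrow> 'a \<Rightarrow> 'a) \<Rightarrow> bool" where
  "is_tconorm S \<longleftrightarrow>
     (\<forall>x x' y y'. x \<le> x' \<longrightarrow> y \<le> y' \<longrightarrow> S x y \<le> S x' y') \<and>
     (\<forall>x y. S x y = S y x) \<and>
     (\<forall>x y z. S (S x y) z = S x (S y z)) \<and>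
     (\<forall>x. S x bot = x)"

definition nfold :: "('a \<Rightarrow> 'a \<Rightarrow> 'a) \<Rightarrow> (nat \<Rightarrow> 'a) \<Rightarrow> nat \<Rightarrow> 'a" where
  "nfold S g n = foldl S (g 1) (map g [2..<Suc n])"

text \<open>Elements of L^n are represented as functions nat \<Rightarrow> L, of which only the
  components 1..n are used; families f i, i = 1..n.\<close>
definition weight_family ::
  "('a::complete_lattice \<Rightarrow> 'a \<Rightarrow> 'a) \<Rightarrow> nat \<Rightarrow> (nat \<Rightarrow> (nat \<Rightarrow> 'a) \<Rightarrow> 'a) \<Rightarrow> bool" where
  "weight_family S n f \<longleftrightarrow> (\<forall>a. nfold S (\<lambda>i. f i a) n = top)"

definition distributive_family ::
  "('a::complete_lattice \<Rightarrow> 'a \<Rightarrow> 'a) \<Rightarrow> ('a \<Rightarrow> 'a \<Rightarrow> 'a) \<Rightarrow> nat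
     \<Rightarrow> (nat \<Rightarrow> (nat \<Rightarrow> 'a) \<Rightarrow> 'a) \<Rightarrow> bool" where
  "distributive_family S T n f \<longleftrightarrow> weight_family S n f \<and>
     (\<forall>c a. T c (nfold S (\<lambda>i. f i a) n) = nfold S (\<lambda>i. T c (f i a)) n)"

definition LM :: "nat \<Rightarrow> (nat \<Rightarrow> 'a::complete_lattice) \<Rightarrow> nat \<Rightarrow> 'a" where
  "LM n a k = Sup {Inf (a ` J) | J. J \<subseteq> {1..n} \<and> card J = k}"

definition DYOWA ::
  "('a::complete_lattice \<Rightarrow> 'a \<Rightarrow> 'a) \<Rightarrow> ('a \<Rightarrow> 'a \<Rightarrow> 'a) \<Rightarrow> nat
     \<Rightarrow> (nat \<Rightarrow> (nat \<Rightarrow> 'a) \<Rightarrow> 'a) \<Rightarrow> (nat \<Rightarrow> 'a) \<Rightarrow> 'a" where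
  "DYOWA S T n f a = nfold S (\<lambda>i. T (f i a) (LM n a i)) n"

end

theory Submission
  imports Defs
begin

text \<open>Since the weights of a distributive family aggregate to \<open>\<top>\<close>, aggregating a
  constant vector \<open>c\<close> returns \<open>c\<close>. Every component of the Lizasoain--Moreno vector
  lies between the meet and the join of the \<open>a\<^sub>i\<close>, so monotonicity of the t-norm and
  the t-conorm squeezes \<open>DYOWA\<close> between these two constants.\<close>

lemma nfold_Suc:
  assumes "m \<ge> 1"
  shows "nfold S g (Suc m) = S (nfold S g m) (g (Suc m))"
proof -
  have "[2..<Suc (Suc m)] = [2..<Suc m] @ [Suc m]" using assms by simp
  then show ?thesis by (simp add: nfold_def)
qed

lemma nfold_mono:
  fixes S :: "'a::order \<Rightarrow> 'a \<Rightarrow> 'a"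
  assumes S_mono: "\<And>x x' y y'. x \<le> x' \<Longrightarrow> y \<le> y' \<Longrightarrow> S x y \<le> S x' y'"
    and "n \<ge> 1" and le: "\<And>i. i \<in> {1..n} \<Longrightarrow> g i \<le> h i"
  shows "nfold S g n \<le> nfold S h n"
  using \<open>n \<ge> 1\<close> le
proof (induction n rule: nat_induct_at_least)
  case base
  then show ?case by (simp add: nfold_def)
next
  case (Suc m)
  then have "nfold S g m \<le> nfold S h m" and "g (Suc m) \<le> h (Suc m)" by auto
  then show ?case using Suc.hyps by (simp add: nfold_Suc S_mono)
qed

lemma LM_le_SUP:
  assumes "k \<ge> 1"
  shows "LM n a k \<le> (SUP i\<in>{1..n}. a i)"
  unfolding LM_def
proof (rule Sup_least)
  fix x assume "x \<in> {Inf (a ` J) |J. J \<subseteq> {1..n} \<and> card J = k}"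
  then obtain J where J: "J \<subseteq> {1..n}" "card J = k" "x = Inf (a ` J)" by auto
  with assms obtain j where j: "j \<in> J" by fastforce
  have "x \<le> a j" using J j by (auto intro: Inf_lower)
  also have "\<dots> \<le> (SUP i\<in>{1..n}. a i)" using J j by (auto intro: SUP_upper)
  finally show "x \<le> (SUP i\<in>{1..n}. a i)" .
qed

lemma INF_le_LM:
  assumes "k \<le> n"
  shows "(INF i\<in>{1..n}. a i) \<le> LM n a k"
proof -
  have "(INF i\<in>{1..n}. a i) \<le> Inf (a ` {1..k})"
    using assms by (intro INF_superset_mono) auto
  also have "\<dots> \<le> LM n a k"
    unfolding LM_def using assms by (intro Sup_upper) auto
  finally show ?thesis .
qed

lemma distributive_family_nfold_const:
  assumes "is_tnorm T" and "distributive_family S T n f"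
  shows "nfold S (\<lambda>i. T (f i a) c) n = c"
proof -
  have T_comm: "\<And>x y. T x y = T y x" and T_top: "\<And>x. T x top = x"
    using \<open>is_tnorm T\<close> unfolding is_tnorm_def by auto
  have weights: "nfold S (\<lambda>i. f i a) n = top"
    and distrib: "T c (nfold S (\<lambda>i. f i a) n) = nfold S (\<lambda>i. T c (f i a)) n"
    using \<open>distributive_family S T n f\<close>
    unfolding distributive_family_def weight_family_def by auto
  have "nfold S (\<lambda>i. T (f i a) c) n = nfold S (\<lambda>i. T c (f i a)) n"
    by (simp add: T_comm)
  also have "\<dots> = T c (nfold S (\<lambda>i. f i a) n)" by (simp add: distrib)
  also have "\<dots> = c" by (simp add: weights T_top)
  finally show ?thesis .
qed

lemma distributive_family_nfold_bounds:
  assumes "n \<ge> 1" "is_tnorm T" "is_tconorm S" "distributive_family S T n f"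
    and bounds: "\<And>i. i \<in> {1..n} \<Longrightarrow> c \<le> b i \<and> b i \<le> d"
  shows "c \<le> nfold S (\<lambda>i. T (f i a) (b i)) n \<and> nfold S (\<lambda>i. T (f i a) (b i)) n \<le> d"
proof -
  have T_mono: "\<And>x x' y y'. x \<le> x' \<Longrightarrow> y \<le> y' \<Longrightarrow> T x y \<le> T x' y'"
    using \<open>is_tnorm T\<close> unfolding is_tnorm_def by blast
  have S_mono: "\<And>x x' y y'. x \<le> x' \<Longrightarrow> y \<le> y' \<Longrightarrow> S x y \<le> S x' y'"
    using \<open>is_tconorm S\<close> unfolding is_tconorm_def by blast
  have const: "\<And>e. nfold S (\<lambda>i. T (f i a) e) n = e"
    using assms(2,4) by (rule distributive_family_nfold_const)
  have "nfold S (\<lambda>i. T (f i a) c) n \<le> nfold S (\<lambda>i. T (f i a) (b i)) n"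
    and "nfold S (\<lambda>i. T (f i a) (b i)) n \<le> nfold S (\<lambda>i. T (f i a) d) n"
    using \<open>n \<ge> 1\<close> bounds by (auto intro!: nfold_mono S_mono T_mono)
  then show ?thesis by (simp add: const)
qed

theorem proposition4:
  fixes T S :: "'a::complete_lattice \<Rightarrow> 'a \<Rightarrow> 'a"
    and n :: nat
    and f :: "nat \<Rightarrow> (nat \<Rightarrow> 'a) \<Rightarrow> 'a"
    and a :: "nat \<Rightarrow> 'a"
  assumes "n \<ge> 1"
    and "is_tnorm T"
    and "is_tconorm S"
    and "distributive_family S T n f"
  shows "(INF i\<in>{1..n}. a i) \<le> DYOWA S T n f a \<and> DYOWA S T n f a \<le> (SUP i\<in>{1..n}. a i)"
  unfolding DYOWA_def
  using assms
proof (rule distributive_family_nfold_bounds)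
  fix i assume "i \<in> {1..n}"
  then show "(INF i\<in>{1..n}. a i) \<le> LM n a i \<and> LM n a i \<le> (SUP i\<in>{1..n}. a i)"
    using INF_le_LM[of i n a] LM_le_SUP[of i n a] by simp
qed

end
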